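(* Let $d \geq 0$, let $\mathcal{H}$ be a $(d+1)$-dimensional complex Hilbert space, and let $(\ket{x})_{x \in X}$ be an orthonormal basis of $\mathcal{H}$; call the associated classical structure (the special commutative $\dagger$-Frobenius algebra whose comultiplication copies the basis, $\ket{x} \mapsto \ket{x}\otimes\ket{x}$) the $X$ structure, and the basis vectors the $X$-classical points. Let $\mathbb{G} = (X,\oplus,0)$ be a finite abelian group structure on $X$ (so of order $d+1$), and let $\mathbb{S}$ be a finite consistent system of $\mathbb{G}$-valued $\mathbb{Z}$-module equations $$\bigoplus_{r=1}^{M} n^s_r\, y_r = a^s, \qquad s = 1,\dots,S,$$ with $n^s_r \in \mathbb{Z}$ and $a^s \in \mathbb{G}$, which has no solution in $\mathbb{G}$. Then there exists a quasi-special commutative $\dagger$-Frobenius algebra $Z$ on $\mathcal{H}$ (the $Z$ structure) such that: (i) the $X$ and $Z$ structures are strongly complementary, so that the $X$-classical points form a subgroup $K$ of the abelian group $P$ of $Z$-phases; (ii) the subgroup $K$ of $X$-classical points is isomorphic to $\mathbb{G}$; (iii) the system $\mathbb{S}$ (with its constants $a^s$ regarded as elements of $K \leq P$ via this isomorphism) admits a solution $(y_r := \beta_r)_{r=1}^M$ in the group $P$ of $Z$-phases.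
   Context: A system $\bigoplus_{r=1}^{M} n^s_r y_r = a^s$ ($s=1,\dots,S$) of $\mathbb{Z}$-module equations valued in an abelian group $K$ is consistent if, writing $\underline{n}^s = (n^s_1,\dots,n^s_M) \in \mathbb{Z}^M$, for every $J \geq 1$, indices $s_1,\dots,s_J$ and integers $c_1,\dots,c_J$: $\sum_j c_j \underline{n}^{s_j} = \underline{0}$ in $\mathbb{Z}^M$ implies $\bigoplus_j c_j a^{s_j} = 0$ in $K$. If $K \leq P$, a solution in $P$ is a family $(\beta_r)_{r=1}^M$ of elements of $P$ satisfying all equations with $y_r := \beta_r$. A quasi-special commutative $\dagger$-Frobenius algebra on $\mathcal{H}$ consists of a commutative associative unital multiplication $\mu_Z:\mathcal{H}\otimes\mathcal{H}\to\mathcal{H}$ with unit state $\eta_Z$, satisfying the Frobenius law with respect to its adjoint $\mu_Z^\dagger$, and such that $\mu_Z \circ \mu_Z^\dagger$ is a non-zero scalar multiple of the identity. A phase state (a $Z$-phase) is a state $\ket{\psi}$ with $(\bra{\psi}\otimes \mathrm{id}_{\mathcal{H}})\circ \mu_Z^\dagger \circ \ket{\psi} = \eta_Z$; the $Z$-phases form an abelian group $P$ under $(\psi,\phi)\mapsto \mu_Z(\ket{\psi}\otimes\ket{\phi})$ with unit $\eta_Z$ (states identified up to global phase). The $X$ and $Z$ structures are strongly complementary if the multiplication/unit of $Z$ and the comultiplication/counit of $X$ satisfy the bialgebra laws (up to scalars); in that case the $X$-classical points are $Z$-phases and form a subgroup of $P$. *)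

theory Defs
  imports Complex_Main "HOL-Algebra.Algebra"
begin

text \<open>The Hilbert space H is modelled as the space of functions 'x \<Rightarrow> complex
  over a finite type 'x (dimension d+1 = CARD('x)), with the standard inner product,
  so that the kets of the elements of 'x form the orthonormal basis defining the
  X structure.  Two- and three-fold tensor products are functions on 'x \<times> 'x
  and 'x \<times> 'x \<times> 'x.  A multiplication mu_Z : H\<otimes>H \<rightarrow> H is given by its structure
  constants m a b c (the c-component of mu_Z applied to the ket of (a,b)); its
  adjoint (comultiplication) has the complex-conjugated constants.\<close>

definition ket :: "'x \<Rightarrow> 'x \<Rightarrow> complex" where
  "ket x = (\<lambda>y. if y = x then 1 else 0)"

definition tensor :: "('x \<Rightarrow> complex) \<Rightarrow> ('x \<Rightarrow> complex) \<Rightarrow> ('x \<times> 'x \<Rightarrow> complex)" where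
  "tensor \<psi> \<phi> = (\<lambda>(a, b). \<psi> a * \<phi> b)"

definition mu :: "('x::finite \<Rightarrow> 'x \<Rightarrow> 'x \<Rightarrow> complex) \<Rightarrow> ('x \<times> 'x \<Rightarrow> complex) \<Rightarrow> ('x \<Rightarrow> complex)" where
  "mu m v = (\<lambda>c. \<Sum>a\<in>UNIV. \<Sum>b\<in>UNIV. m a b c * v (a, b))"

definition comu :: "('x::finite \<Rightarrow> 'x \<Rightarrow> 'x \<Rightarrow> complex) \<Rightarrow> ('x \<Rightarrow> complex) \<Rightarrow> ('x \<times> 'x \<Rightarrow> complex)" where
  "comu m v = (\<lambda>(a, b). \<Sum>c\<in>UNIV. cnj (m a b c) * v c)"

text \<open>mu tensor id, id tensor mu on H\<otimes>(H\<otimes>H) (bracketing a,(b,c))\<close>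
definition mu_left :: "('x::finite \<Rightarrow> 'x \<Rightarrow> 'x \<Rightarrow> complex) \<Rightarrow> ('x \<times> 'x \<times> 'x \<Rightarrow> complex) \<Rightarrow> ('x \<times> 'x \<Rightarrow> complex)" where
  "mu_left m w = (\<lambda>(e, c). \<Sum>a\<in>UNIV. \<Sum>b\<in>UNIV. m a b e * w (a, b, c))"

definition mu_right :: "('x::finite \<Rightarrow> 'x \<Rightarrow> 'x \<Rightarrow> complex) \<Rightarrow> ('x \<times> 'x \<times> 'x \<Rightarrow> complex) \<Rightarrow> ('x \<times> 'x \<Rightarrow> complex)" where
  "mu_right m w = (\<lambda>(a, e). \<Sum>b\<in>UNIV. \<Sum>c\<in>UNIV. m b c e * w (a, b, c))"

text \<open>mu-dagger tensor id and id tensor mu-dagger\<close>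
definition comu_left :: "('x::finite \<Rightarrow> 'x \<Rightarrow> 'x \<Rightarrow> complex) \<Rightarrow> ('x \<times> 'x \<Rightarrow> complex) \<Rightarrow> ('x \<times> 'x \<times> 'x \<Rightarrow> complex)" where
  "comu_left m v = (\<lambda>(a, b, c). \<Sum>e\<in>UNIV. cnj (m a b e) * v (e, c))"

definition comu_right :: "('x::finite \<Rightarrow> 'x \<Rightarrow> 'x \<Rightarrow> complex) \<Rightarrow> ('x \<times> 'x \<Rightarrow> complex) \<Rightarrow> ('x \<times> 'x \<times> 'x \<Rightarrow> complex)" where
  "comu_right m v = (\<lambda>(a, b, c). \<Sum>e\<in>UNIV. cnj (m b c e) * v (a, e))"

definition swap2 :: "('x \<times> 'x \<Rightarrow> complex) \<Rightarrow> ('x \<times> 'x \<Rightarrow> complex)" where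
  "swap2 v = (\<lambda>(a, b). v (b, a))"

definition qs_comm_dagger_frobenius ::
  "('x::finite \<Rightarrow> 'x \<Rightarrow> 'x \<Rightarrow> complex) \<Rightarrow> ('x \<Rightarrow> complex) \<Rightarrow> bool" where
  "qs_comm_dagger_frobenius m \<eta> \<longleftrightarrow>
     (\<forall>v. mu m (swap2 v) = mu m v) \<and>
     (\<forall>w. mu m (mu_left m w) = mu m (mu_right m w)) \<and>
     (\<forall>\<psi>. mu m (tensor \<eta> \<psi>) = \<psi>) \<and>
     (\<forall>\<psi>. mu m (tensor \<psi> \<eta>) = \<psi>) \<and>
     (\<forall>v. mu_left m (comu_right m v) = comu m (mu m v)) \<and>
     (\<forall>v. mu_right m (comu_left m v) = comu m (mu m v)) \<and>
     (\<exists>k::complex. k \<noteq> 0 \<and> (\<forall>\<psi>. mu m (comu m \<psi>) = (\<lambda>x. k * \<psi> x)))"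

text \<open>Z-phase: (bra psi \<otimes> id) o mu-dagger o ket psi = eta.\<close>
definition is_phase :: "('x::finite \<Rightarrow> 'x \<Rightarrow> 'x \<Rightarrow> complex) \<Rightarrow> ('x \<Rightarrow> complex) \<Rightarrow> ('x \<Rightarrow> complex) \<Rightarrow> bool" where
  "is_phase m \<eta> \<psi> \<longleftrightarrow> (\<lambda>b. \<Sum>a\<in>UNIV. cnj (\<psi> a) * comu m \<psi> (a, b)) = \<eta>"

text \<open>States up to global phase.\<close>
definition phase_class :: "('x \<Rightarrow> complex) \<Rightarrow> ('x \<Rightarrow> complex) set" where
  "phase_class \<psi> = {(\<lambda>x. c * \<psi> x) | c. cmod c = 1}"

definition phase_group :: "('x::finite \<Rightarrow> 'x \<Rightarrow> 'x \<Rightarrow> complex) \<Rightarrow> ('x \<Rightarrow> complex) \<Rightarrow> ('x \<Rightarrow> complex) set monoid" where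
  "phase_group m \<eta> =
     \<lparr> carrier = phase_class ` {\<psi>. is_phase m \<eta> \<psi>},
       monoid.mult = (\<lambda>A B. phase_class (mu m (tensor (SOME \<psi>. \<psi> \<in> A) (SOME \<phi>. \<phi> \<in> B)))),
       one = phase_class \<eta> \<rparr>"

definition deltaX :: "('x::finite \<Rightarrow> complex) \<Rightarrow> ('x \<times> 'x \<Rightarrow> complex)" where
  "deltaX v = (\<lambda>(a, b). if a = b then v a else 0)"

definition epsX :: "('x::finite \<Rightarrow> complex) \<Rightarrow> complex" where
  "epsX v = (\<Sum>a\<in>UNIV. v a)"

text \<open>(mu \<otimes> mu) o (id \<otimes> sigma \<otimes> id) o (deltaX \<otimes> deltaX), which sends the ket of (a,b)
  to mu(ket(a,b)) \<otimes> mu(ket(a,b)), extended linearly.\<close>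
definition bialg_rhs :: "('x::finite \<Rightarrow> 'x \<Rightarrow> 'x \<Rightarrow> complex) \<Rightarrow> ('x \<times> 'x \<Rightarrow> complex) \<Rightarrow> ('x \<times> 'x \<Rightarrow> complex)" where
  "bialg_rhs m v = (\<lambda>(c, c'). \<Sum>a\<in>UNIV. \<Sum>b\<in>UNIV. m a b c * m a b c' * v (a, b))"

text \<open>Strong complementarity: (mu_Z, eta_Z, deltaX, epsX) satisfy the bialgebra laws up to
  non-zero scalars.\<close>
definition strongly_complementary :: "('x::finite \<Rightarrow> 'x \<Rightarrow> 'x \<Rightarrow> complex) \<Rightarrow> ('x \<Rightarrow> complex) \<Rightarrow> bool" where
  "strongly_complementary m \<eta> \<longleftrightarrow>
     (\<exists>k::complex. k \<noteq> 0 \<and> (\<forall>v. deltaX (mu m v) = (\<lambda>p. k * bialg_rhs m v p))) \<and>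
     (\<exists>k::complex. k \<noteq> 0 \<and> (\<forall>v. epsX (mu m v) = k * (\<Sum>a\<in>UNIV. \<Sum>b\<in>UNIV. v (a, b)))) \<and>
     (\<exists>k::complex. k \<noteq> 0 \<and> deltaX \<eta> = (\<lambda>p. k * tensor \<eta> \<eta> p)) \<and>
     epsX \<eta> \<noteq> 0"

definition consistent_system :: "('g, 'b) monoid_scheme \<Rightarrow> nat \<Rightarrow> nat \<Rightarrow> (nat \<Rightarrow> nat \<Rightarrow> int) \<Rightarrow> (nat \<Rightarrow> 'g) \<Rightarrow> bool" where
  "consistent_system G M S n a \<longleftrightarrow>
     (\<forall>J::nat. \<forall>idx::nat \<Rightarrow> nat. \<forall>c::nat \<Rightarrow> int.
        J \<ge> 1 \<longrightarrow> (\<forall>j<J. idx j < S) \<longrightarrow>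
        (\<forall>r<M. (\<Sum>j<J. c j * n (idx j) r) = 0) \<longrightarrow>
        finprod G (\<lambda>j. a (idx j) [^]\<^bsub>G\<^esub> c j) {..<J} = \<one>\<^bsub>G\<^esub>)"

definition has_solution :: "('g, 'b) monoid_scheme \<Rightarrow> nat \<Rightarrow> nat \<Rightarrow> (nat \<Rightarrow> nat \<Rightarrow> int) \<Rightarrow> (nat \<Rightarrow> 'g) \<Rightarrow> bool" where
  "has_solution G M S n a \<longleftrightarrow>
     (\<exists>y::nat \<Rightarrow> 'g. (\<forall>r<M. y r \<in> carrier G) \<and>
        (\<forall>s<S. finprod G (\<lambda>r. y r [^]\<^bsub>G\<^esub> n s r) {..<M} = a s))"

end

theory Submission
  imports Defs
begin

text \<open>For \<open>Z\<close> take the group algebra \<open>\<complex>[G]\<close>: \<open>\<mu>\<^sub>Z\<close> maps \<open>|a\<rangle> \<otimes> |b\<rangle>\<close> to \<open>|a \<oplus> b\<rangle>\<close> and the unit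
  is \<open>|0\<rangle>\<close>.  It is a quasi-special commutative \<open>\<dagger>\<close>-Frobenius algebra, strongly complementary to
  the copying structure \<open>X\<close>, and its phases are the states \<open>\<psi>\<close> whose autocorrelation
  \<open>\<psi>\<^sup>* \<star> \<psi>\<close> is \<open>\<delta>\<^sub>0\<close>; the kets form a copy of \<open>G\<close> inside the phase group \<open>P\<close>.  The Fourier
  transform turns convolution into pointwise multiplication, so \<open>P\<close> is the group of unimodular
  functions on the characters of \<open>G\<close>, a product of circle groups.  Every character maps the
  consistent system to a consistent system over the circle, which is solvable because the circle
  is divisible; Fourier inversion assembles these solutions into a solution in \<open>P\<close>.\<close>

section \<open>Systems of equations in the circle group\<close>

lemma power_int_sum:
  "finite A \<Longrightarrow> (w::complex) \<noteq> 0 \<Longrightarrow> (\<Prod>s\<in>A. w powi f s) = w powi (\<Sum>s\<in>A. f s)"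
  by (induction A rule: finite_induct) (auto simp: power_int_add)

lemma prod_power_int_distrib:
  "finite A \<Longrightarrow> (\<Prod>s\<in>A. (x s :: complex) powi k) = (\<Prod>s\<in>A. x s) powi k"
  by (induction A rule: finite_induct) (auto simp: power_int_mult_distrib)

lemma unimodular_cnj_eq_inverse: "cmod (z::complex) = 1 \<Longrightarrow> cnj z = inverse z"
  using divide_conv_cnj[of z 1] by (simp add: field_simps)

lemma unimodular_cnj_mult_self: "cmod (z::complex) = 1 \<Longrightarrow> cnj z * z = 1"
  by (metis complex_norm_square mult.commute of_real_1 power_one)

lemma unit_circle_nth_root:
  assumes "cmod (z::complex) = 1" "k > 0"
  shows "\<exists>w. cmod w = 1 \<and> w ^ k = z"
proof -
  have "z \<noteq> 0" using assms(1) by auto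
  with assms(2) obtain c where "bij_betw (\<lambda>x. c * x) {x. x ^ k = 1} {x. x ^ k = z}"
    using bij_betw_nth_root_unity[of z k] by blast
  then have "c * 1 \<in> {x. x ^ k = z}" by (rule bij_betw_apply) simp
  then have ck: "c ^ k = z" by simp
  then have "cmod c ^ k = 1 ^ k" using assms(1) by (metis norm_power power_one)
  then have "cmod c = 1" using power_eq_imp_eq_base[of "cmod c" k 1] assms(2) by simp
  with ck show ?thesis by blast
qed

lemma exists_nontrivial_root_of_unity:
  assumes "k \<ge> 2"
  shows "\<exists>\<omega>::complex. cmod \<omega> = 1 \<and> \<omega> ^ k = 1 \<and> \<omega> \<noteq> 1"
proof -
  have "card {z::complex. z ^ k = 1} = k" using assms by (intro card_nth_roots) auto
  moreover have "card {1::complex} = 1" by simp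
  ultimately have "\<not> {z::complex. z ^ k = 1} \<subseteq> {1}"
    using assms card_mono[of "{1::complex}" "{z. z ^ k = 1}"] by auto
  then obtain \<omega> :: complex where \<omega>: "\<omega> ^ k = 1" "\<omega> \<noteq> 1" by auto
  then have "cmod \<omega> ^ k = 1 ^ k" by (metis norm_one norm_power power_one)
  then have "cmod \<omega> = 1" using assms power_eq_imp_eq_base[of "cmod \<omega>" k 1] by simp
  with \<omega> show ?thesis by blast
qed

lemma int_closed_set_multiples:
  fixes I :: "int set"
  assumes "x \<in> I" and closed: "\<And>x y t. x \<in> I \<Longrightarrow> y \<in> I \<Longrightarrow> x - t * y \<in> I"
  shows "\<exists>g\<in>I. g \<ge> 0 \<and> (\<forall>k\<in>I. g dvd k)"
proof -
  have zero: "0 \<in> I" using closed[OF assms(1) assms(1), of 1] by simp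
  show ?thesis
  proof (cases "I \<subseteq> {0}")
    case True
    with zero show ?thesis by auto
  next
    case False
    then obtain k0 where k0: "k0 \<in> I" "k0 \<noteq> 0" by auto
    have "\<bar>k0\<bar> \<in> I" using k0(1) closed[OF zero k0(1), of 1] by (cases "k0 \<ge> 0") auto
    then have ex: "\<exists>m. int m \<in> I \<and> m > 0" using k0(2) by (intro exI[of _ "nat \<bar>k0\<bar>"]) auto
    define g where "g = (LEAST m. int m \<in> I \<and> m > 0)"
    have g: "int g \<in> I" "g > 0" using LeastI_ex[OF ex] unfolding g_def by auto
    have "int g dvd k" if k: "k \<in> I" for k
    proof -
      have "k mod int g = k - (k div int g) * int g" by (simp add: minus_div_mult_eq_mod)
      then have mod_in: "k mod int g \<in> I" using closed[OF k g(1)] by simp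
      have "k mod int g = 0"
      proof (rule ccontr)
        assume "k mod int g \<noteq> 0"
        then have "nat (k mod int g) > 0" "int (nat (k mod int g)) \<in> I"
          using g(2) mod_in pos_mod_sign[of "int g" k] by auto
        then have "g \<le> nat (k mod int g)" unfolding g_def by (blast intro: Least_le)
        moreover have "k mod int g < int g" using g(2) by simp
        ultimately show False using pos_mod_sign[of "int g" k] g(2) by linarith
      qed
      then show ?thesis by (simp add: dvd_eq_mod_eq_0)
    qed
    with g show ?thesis by (intro bexI[of _ "int g"]) auto
  qed
qed

definition row_relation :: "('e \<Rightarrow> 'v \<Rightarrow> int) \<Rightarrow> 'e set \<Rightarrow> 'v set \<Rightarrow> ('e \<Rightarrow> int) \<Rightarrow> bool" where
  "row_relation n E V c \<longleftrightarrow> (\<forall>r\<in>V. (\<Sum>s\<in>E. c s * n s r) = 0)"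

lemma row_relation_insert:
  "row_relation n E (insert v V) c \<longleftrightarrow> row_relation n E V c \<and> (\<Sum>s\<in>E. c s * n s v) = 0"
  by (auto simp: row_relation_def)

lemma row_relation_diff:
  "row_relation n E V c \<Longrightarrow> row_relation n E V d \<Longrightarrow> row_relation n E V (\<lambda>s. c s - t * d s)"
  by (simp add: row_relation_def algebra_simps sum_subtractf sum_distrib_left[symmetric])

lemma column_sum_diff:
  fixes n :: "'e \<Rightarrow> 'v \<Rightarrow> 'a::comm_ring"
  shows "(\<Sum>s\<in>E. (c s - t * d s) * n s v) = (\<Sum>s\<in>E. c s * n s v) - t * (\<Sum>s\<in>E. d s * n s v)"
  by (simp add: algebra_simps sum_subtractf sum_distrib_left)

lemma row_relation_column_generator:
  "\<exists>cg. row_relation n E V cg \<and> (\<Sum>s\<in>E. cg s * n s v) \<ge> 0 \<and>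
     (\<forall>c. row_relation n E V c \<longrightarrow> (\<Sum>s\<in>E. cg s * n s v) dvd (\<Sum>s\<in>E. c s * n s v))"
proof -
  define col where "col c = (\<Sum>s\<in>E. c s * n s v)" for c
  have "\<exists>g\<in>col ` {c. row_relation n E V c}. g \<ge> 0 \<and> (\<forall>k\<in>col ` {c. row_relation n E V c}. g dvd k)"
  proof (rule int_closed_set_multiples)
    show "col (\<lambda>_. 0) \<in> col ` {c. row_relation n E V c}" by (simp add: row_relation_def)
  next
    fix x y t assume "x \<in> col ` {c. row_relation n E V c}" "y \<in> col ` {c. row_relation n E V c}"
    then show "x - t * y \<in> col ` {c. row_relation n E V c}"
      by (auto simp: col_def simp flip: column_sum_diff intro: row_relation_diff)
  qed
  then show ?thesis unfolding col_def by blast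
qed

text \<open>A homomorphism from the relations among the rows restricted to the columns \<open>V\<close> into
  the circle, trivial on the relations that also hold in the column \<open>v\<close>, factors through the
  subgroup \<open>g\<int>\<close> of values in column \<open>v\<close>; divisibility of the circle extends it to \<open>\<int>\<close>,
  which is the value \<open>w\<close> of the unknown \<open>y\<^sub>v\<close>.\<close>

lemma unit_circle_extend_column:
  fixes n :: "'e \<Rightarrow> 'v \<Rightarrow> int" and a :: "'e \<Rightarrow> complex"
  assumes E: "finite E" and unit: "\<forall>s\<in>E. cmod (a s) = 1"
    and cons: "\<forall>c. row_relation n E (insert v V) c \<longrightarrow> (\<Prod>s\<in>E. a s powi c s) = 1"
  shows "\<exists>w. cmod w = 1 \<and> (\<forall>c. row_relation n E V c \<longrightarrow>
           (\<Prod>s\<in>E. a s powi c s) = w powi (\<Sum>s\<in>E. c s * n s v))"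
proof -
  define col where "col c = (\<Sum>s\<in>E. c s * n s v)" for c
  obtain cg where cg: "row_relation n E V cg" "col cg \<ge> 0"
    and dvd: "\<And>c. row_relation n E V c \<Longrightarrow> col cg dvd col c"
    using row_relation_column_generator[of n E V v] unfolding col_def by blast
  define B where "B = (\<Prod>s\<in>E. a s powi cg s)"
  have a0: "a s \<noteq> 0" if "s \<in> E" for s using unit that by auto
  obtain w where w: "cmod w = 1" "w powi col cg = B"
  proof (cases "col cg = 0")
    case True
    then have "B = 1" using cons cg(1) by (simp add: B_def row_relation_insert col_def)
    with True show ?thesis using that[of 1] by simp
  next
    case False
    have "cmod B = 1" unfolding B_def using unit by (simp add: prod_norm[symmetric] norm_power_int)
    then obtain w where "cmod w = 1" "w ^ nat (col cg) = B"
      using unit_circle_nth_root[of B "nat (col cg)"] False cg(2) by auto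
    then show ?thesis using that[of w] cg(2) by (simp add: power_int_def)
  qed
  have "(\<Prod>s\<in>E. a s powi c s) = w powi col c" if c: "row_relation n E V c" for c
  proof -
    obtain t where t: "col c = col cg * t" using dvd[OF c] by blast
    define c' where "c' s = c s - t * cg s" for s
    have "row_relation n E V c'" unfolding c'_def by (rule row_relation_diff[OF c cg(1)])
    moreover have "col c' = 0" using t unfolding c'_def col_def column_sum_diff by simp
    ultimately have "row_relation n E (insert v V) c'" by (simp add: row_relation_insert col_def)
    then have c'1: "(\<Prod>s\<in>E. a s powi c' s) = 1" using cons by blast
    have "(\<Prod>s\<in>E. a s powi c s) = (\<Prod>s\<in>E. a s powi c' s * (a s powi cg s) powi t)"
      by (intro prod.cong refl) (simp add: c'_def a0 power_int_mult[symmetric]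
          power_int_add[symmetric] mult.commute)
    also have "\<dots> = B powi t"
      using c'1 by (simp add: prod.distrib B_def prod_power_int_distrib[OF E])
    also have "\<dots> = w powi col c" using w(2) t by (simp add: power_int_mult)
    finally show ?thesis .
  qed
  with w(1) show ?thesis unfolding col_def by blast
qed

lemma constants_trivial_without_unknowns:
  fixes a :: "'e \<Rightarrow> complex"
  assumes "finite E" and "\<forall>c. row_relation n E {} c \<longrightarrow> (\<Prod>s\<in>E. a s powi c s) = 1"
    and "s \<in> E"
  shows "a s = 1"
proof -
  have "row_relation n E {} (\<lambda>t. if t = s then 1 else 0)" by (simp add: row_relation_def)
  then have "(\<Prod>t\<in>E. a t powi (if t = s then 1 else 0)) = 1" using assms(2) by blast
  then show ?thesis using assms(1,3) by (simp add: if_distrib[of "\<lambda>k. _ powi k"] cong: if_cong)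
qed

lemma unit_circle_solution:
  fixes n :: "'e \<Rightarrow> 'v \<Rightarrow> int" and a :: "'e \<Rightarrow> complex"
  assumes "finite V" and E: "finite E" and "\<forall>s\<in>E. cmod (a s) = 1"
    and "\<forall>c. row_relation n E V c \<longrightarrow> (\<Prod>s\<in>E. a s powi c s) = 1"
  shows "\<exists>y. (\<forall>r. cmod (y r) = 1) \<and> (\<forall>s\<in>E. (\<Prod>r\<in>V. y r powi n s r) = a s)"
  using assms(1,3,4)
proof (induction V arbitrary: a rule: finite_induct)
  case empty
  then show ?case
    using constants_trivial_without_unknowns[OF E] by (intro exI[of _ "\<lambda>_. 1"]) auto
next
  case (insert v V a)
  obtain w where w: "cmod w = 1"
    and w_rel: "\<And>c. row_relation n E V c \<Longrightarrow>
                  (\<Prod>s\<in>E. a s powi c s) = w powi (\<Sum>s\<in>E. c s * n s v)"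
    using unit_circle_extend_column[OF E insert.prems] by blast
  have w0: "w \<noteq> 0" using w by auto
  define a' where "a' s = a s * w powi (- n s v)" for s
  have a'_unit: "\<forall>s\<in>E. cmod (a' s) = 1"
    using insert.prems(1) w by (simp add: a'_def norm_mult norm_power_int)
  have a'_rel: "\<forall>c. row_relation n E V c \<longrightarrow> (\<Prod>s\<in>E. a' s powi c s) = 1"
  proof (intro allI impI)
    fix c assume c: "row_relation n E V c"
    have "(\<Prod>s\<in>E. a' s powi c s) = (\<Prod>s\<in>E. a s powi c s * w powi (- (c s * n s v)))"
      by (intro prod.cong refl)
        (simp add: a'_def power_int_mult_distrib power_int_mult[symmetric] mult.commute)
    also have "\<dots> = w powi (\<Sum>s\<in>E. c s * n s v) * w powi (- (\<Sum>s\<in>E. c s * n s v))"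
      using w_rel[OF c] by (simp add: prod.distrib power_int_sum[OF E w0] sum_negf)
    also have "\<dots> = 1" using w0 by (simp add: power_int_minus)
    finally show "(\<Prod>s\<in>E. a' s powi c s) = 1" .
  qed
  obtain y where y: "\<forall>r. cmod (y r) = 1" "\<forall>s\<in>E. (\<Prod>r\<in>V. y r powi n s r) = a' s"
    using insert.IH[OF a'_unit a'_rel] by blast
  show ?case
  proof (intro exI[of _ "y(v := w)"] conjI ballI allI)
    fix r show "cmod ((y(v := w)) r) = 1" using y(1) w by simp
  next
    fix s assume s: "s \<in> E"
    have "(\<Prod>r\<in>V. (y(v := w)) r powi n s r) = (\<Prod>r\<in>V. y r powi n s r)"
      using insert.hyps by (intro prod.cong) auto
    then have "(\<Prod>r\<in>insert v V. (y(v := w)) r powi n s r) = w powi n s v * a' s"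
      using insert.hyps y(2) s by simp
    also have "\<dots> = a s" using w0 by (simp add: a'_def power_int_minus field_simps)
    finally show "(\<Prod>r\<in>insert v V. (y(v := w)) r powi n s r) = a s" .
  qed
qed

lemma (in comm_group) finprod_int_pow:
  "finite A \<Longrightarrow> f \<in> A \<rightarrow> carrier G \<Longrightarrow> finprod G f A [^] (k::int) = finprod G (\<lambda>v. f v [^] k) A"
  by (induction A rule: finite_induct) (simp_all add: int_pow_distrib Pi_iff)

lemma (in comm_group) finprod_row_relation:
  assumes E: "finite E" and V: "finite V" and y: "y \<in> V \<rightarrow> carrier G"
    and c: "row_relation n E V c"
  shows "finprod G (\<lambda>s. finprod G (\<lambda>v. y v [^] n s v) V [^] c s) E = \<one>"
proof -
  have "finprod G (\<lambda>s. finprod G (\<lambda>v. y v [^] n s v) V [^] c s) E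
      = finprod G (\<lambda>v. y v [^] (\<Sum>s\<in>E. c s * n s v)) V"
    using E
  proof (induction E rule: finite_induct)
    case (insert e E)
    have "finprod G (\<lambda>s. finprod G (\<lambda>v. y v [^] n s v) V [^] c s) (insert e E)
        = finprod G (\<lambda>v. (y v [^] n e v) [^] c e) V
          \<otimes> finprod G (\<lambda>v. y v [^] (\<Sum>s\<in>E. c s * n s v)) V"
      using insert V y by (simp add: Pi_def finprod_int_pow)
    also have "\<dots> = finprod G (\<lambda>v. (y v [^] n e v) [^] c e \<otimes> y v [^] (\<Sum>s\<in>E. c s * n s v)) V"
      using y by (simp add: Pi_def finprod_multf)
    also have "\<dots> = finprod G (\<lambda>v. y v [^] (\<Sum>s\<in>insert e E. c s * n s v)) V"
    proof (rule finprod_cong')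
      fix v assume "v \<in> V"
      then have "y v \<in> carrier G" using y by auto
      then show "(y v [^] n e v) [^] c e \<otimes> y v [^] (\<Sum>s\<in>E. c s * n s v)
          = y v [^] (\<Sum>s\<in>insert e E. c s * n s v)"
        using insert.hyps by (simp add: int_pow_pow int_pow_mult mult.commute)
    qed (use y in auto)
    finally show ?case .
  qed simp
  also have "\<dots> = \<one>" using c by (intro finprod_one_eqI) (simp add: row_relation_def)
  finally show ?thesis .
qed

lemma (in comm_monoid) consistent_system_row_relation:
  assumes "consistent_system G M S n a" and "row_relation n {..<S} {..<M} c"
  shows "finprod G (\<lambda>s. a s [^] c s) {..<S} = \<one>"
proof (cases "S = 0")
  case False
  have "finprod G (\<lambda>j. a (id j) [^] c j) {..<S} = \<one>"
  proof (rule assms(1)[unfolded consistent_system_def, rule_format])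
    show "1 \<le> S" using False by simp
    show "(\<Sum>j<S. c j * n (id j) r) = 0" if "r < M" for r
      using assms(2) that by (simp add: row_relation_def)
  qed simp
  then show ?thesis by simp
qed simp

section \<open>The group algebra as a Frobenius algebra\<close>

lemma ket_mult_left: "ket x y * z = (if y = x then z else 0)"
  by (simp add: ket_def)

lemma ket_mult_right: "z * ket x y = (if y = x then z else 0)"
  by (simp add: ket_def)

locale univ_comm_group = comm_group G for G :: "('x::finite, 'b) monoid_scheme" (structure) +
  assumes carrier_UNIV: "carrier G = UNIV"
begin

lemma in_carrier [simp]: "x \<in> carrier G"
  by (simp add: carrier_UNIV)

lemma inv_mult_cancel_left [simp]: "inv a \<otimes> (a \<otimes> b) = b"
  by (simp add: m_assoc[symmetric])

lemma mult_inv_cancel_left [simp]: "a \<otimes> (inv a \<otimes> b) = b"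
  by (simp add: m_assoc[symmetric])

lemma mult_eq_iff_inv_mult: "a \<otimes> b = c \<longleftrightarrow> b = inv a \<otimes> c"
  by (metis in_carrier inv_solve_left')

lemma inv_mult_eq_one_iff: "inv a \<otimes> c = \<one> \<longleftrightarrow> a = c"
  by (metis in_carrier one_closed r_one inv_solve_left')

lemma sum_mult_reindex: "(\<Sum>b\<in>UNIV. f (a \<otimes> b)) = (\<Sum>b\<in>UNIV. (f b :: 'c::comm_monoid_add))"
  by (rule sum.reindex_bij_witness[where i="\<lambda>b. inv a \<otimes> b" and j="\<lambda>b. a \<otimes> b"]) auto

lemma sum_inv_mult_reindex: "(\<Sum>b\<in>UNIV. f (inv b \<otimes> c)) = (\<Sum>b\<in>UNIV. (f b :: 'c::comm_monoid_add))"
  by (rule sum.reindex_bij_witness[where i="\<lambda>b. inv b \<otimes> c" and j="\<lambda>b. inv b \<otimes> c"])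
     (auto simp: inv_mult m_ac)

lemma sum_inv_reindex: "(\<Sum>b\<in>UNIV. f (inv b)) = (\<Sum>b\<in>UNIV. (f b :: 'c::comm_monoid_add))"
  by (rule sum.reindex_bij_witness[where i="\<lambda>b. inv b" and j="\<lambda>b. inv b"]) auto

definition group_algebra :: "'x \<Rightarrow> 'x \<Rightarrow> 'x \<Rightarrow> complex" where
  "group_algebra a b c = of_bool (a \<otimes> b = c)"

definition group_unit :: "'x \<Rightarrow> complex" where
  "group_unit = ket \<one>"

lemma mu_group_algebra: "mu group_algebra v = (\<lambda>c. \<Sum>a\<in>UNIV. v (a, inv a \<otimes> c))"
  by (simp add: fun_eq_iff mu_def group_algebra_def mult_eq_iff_inv_mult)

lemma cnj_group_algebra [simp]: "cnj (group_algebra a b c) = group_algebra a b c"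
  by (simp add: group_algebra_def)

lemma comu_group_algebra: "comu group_algebra v = (\<lambda>(a, b). v (a \<otimes> b))"
  unfolding comu_def cnj_group_algebra by (simp add: fun_eq_iff group_algebra_def)

lemma sum_group_algebra_left [simp]: "(\<Sum>b\<in>UNIV. group_algebra a b e * f b) = f (inv a \<otimes> e)"
  by (simp add: group_algebra_def mult_eq_iff_inv_mult)

lemma sum_group_algebra_right [simp]: "(\<Sum>c\<in>UNIV. group_algebra a b c * f c) = f (a \<otimes> b)"
  by (simp add: group_algebra_def)

lemma mu_group_algebra_swap: "mu group_algebra (swap2 v) = mu group_algebra v"
proof
  fix c
  have "mu group_algebra (swap2 v) c = (\<Sum>a\<in>UNIV. (\<lambda>b. v (b, inv b \<otimes> c)) (inv a \<otimes> c))"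
    by (simp add: mu_group_algebra swap2_def inv_mult m_ac)
  also have "\<dots> = mu group_algebra v c"
    by (subst sum_inv_mult_reindex) (simp add: mu_group_algebra)
  finally show "mu group_algebra (swap2 v) c = mu group_algebra v c" .
qed

lemma mu_group_algebra_assoc:
  "mu group_algebra (mu_left group_algebra w) = mu group_algebra (mu_right group_algebra w)"
proof
  fix d
  have "mu group_algebra (mu_left group_algebra w) d
      = (\<Sum>e\<in>UNIV. \<Sum>a\<in>UNIV. w (a, inv a \<otimes> e, inv e \<otimes> d))"
    by (simp add: mu_group_algebra mu_left_def)
  also have "\<dots> = (\<Sum>a\<in>UNIV. \<Sum>e\<in>UNIV. w (a, inv a \<otimes> e, inv e \<otimes> d))"
    by (rule sum.swap)
  also have "\<dots> = (\<Sum>a\<in>UNIV. \<Sum>b\<in>UNIV. (\<lambda>e. w (a, inv a \<otimes> e, inv e \<otimes> d)) (a \<otimes> b))"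
    by (subst sum_mult_reindex) simp
  also have "\<dots> = mu group_algebra (mu_right group_algebra w) d"
    by (simp add: mu_group_algebra mu_right_def inv_mult m_ac)
  finally show "mu group_algebra (mu_left group_algebra w) d
      = mu group_algebra (mu_right group_algebra w) d" .
qed

lemma mu_group_unit_left: "mu group_algebra (tensor group_unit \<psi>) = \<psi>"
  by (simp add: fun_eq_iff mu_group_algebra tensor_def group_unit_def ket_mult_left)

lemma mu_group_unit_right: "mu group_algebra (tensor \<psi> group_unit) = \<psi>"
  by (simp add: fun_eq_iff mu_group_algebra tensor_def group_unit_def ket_mult_right
      inv_mult_eq_one_iff cong: if_cong)

lemma group_algebra_frobenius_left:
  "mu_left group_algebra (comu_right group_algebra v) = comu group_algebra (mu group_algebra v)"
  by (simp add: fun_eq_iff mu_left_def comu_right_def comu_group_algebra mu_group_algebra m_assoc)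

lemma group_algebra_frobenius_right:
  "mu_right group_algebra (comu_left group_algebra v) = comu group_algebra (mu group_algebra v)"
proof -
  have "(\<Sum>b\<in>UNIV. v (a \<otimes> b, inv b \<otimes> e)) = (\<Sum>x\<in>UNIV. v (x, inv x \<otimes> (a \<otimes> e)))" for a e
    using sum_mult_reindex[of "\<lambda>x. v (x, inv x \<otimes> (a \<otimes> e))" a] by (simp add: inv_mult m_ac)
  then show ?thesis
    by (simp add: fun_eq_iff mu_right_def comu_left_def comu_group_algebra mu_group_algebra)
qed

lemma group_algebra_quasi_special:
  "mu group_algebra (comu group_algebra \<psi>) = (\<lambda>x. of_nat (card (UNIV :: 'x set)) * \<psi> x)"
  by (simp add: fun_eq_iff comu_group_algebra mu_group_algebra)

lemma group_algebra_frobenius: "qs_comm_dagger_frobenius group_algebra group_unit"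
  unfolding qs_comm_dagger_frobenius_def
  using mu_group_algebra_swap mu_group_algebra_assoc mu_group_unit_left mu_group_unit_right
    group_algebra_frobenius_left group_algebra_frobenius_right group_algebra_quasi_special
  by (intro conjI allI exI[of _ "of_nat (card (UNIV :: 'x set))"]) auto

lemma group_algebra_strongly_complementary: "strongly_complementary group_algebra group_unit"
  unfolding strongly_complementary_def
proof (intro conjI exI[of _ 1])
  have "group_algebra a b c * group_algebra a b c' = (if c = c' then group_algebra a b c else 0)"
    for a b c c'
    by (simp add: group_algebra_def)
  then show "\<forall>v. deltaX (mu group_algebra v) = (\<lambda>p. 1 * bialg_rhs group_algebra v p)"
    by (simp add: fun_eq_iff deltaX_def bialg_rhs_def mu_def)
  show "\<forall>v. epsX (mu group_algebra v) = 1 * (\<Sum>a\<in>UNIV. \<Sum>b\<in>UNIV. v (a, b))"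
  proof
    fix v
    have "epsX (mu group_algebra v) = (\<Sum>c\<in>UNIV. \<Sum>a\<in>UNIV. (\<lambda>b. v (a, b)) (inv a \<otimes> c))"
      by (simp add: epsX_def mu_group_algebra)
    also have "\<dots> = (\<Sum>a\<in>UNIV. \<Sum>c\<in>UNIV. (\<lambda>b. v (a, b)) (inv a \<otimes> c))"
      by (rule sum.swap)
    also have "\<dots> = (\<Sum>a\<in>UNIV. \<Sum>b\<in>UNIV. v (a, b))"
      by (subst sum_mult_reindex) simp
    finally show "epsX (mu group_algebra v) = 1 * (\<Sum>a\<in>UNIV. \<Sum>b\<in>UNIV. v (a, b))" by simp
  qed
  show "deltaX group_unit = (\<lambda>p. 1 * tensor group_unit group_unit p)"
    by (auto simp: fun_eq_iff deltaX_def tensor_def group_unit_def ket_def)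
  show "epsX group_unit \<noteq> 0"
    by (simp add: epsX_def group_unit_def ket_def)
qed simp_all

end

section \<open>The group of phases\<close>

lemma phase_class_iff: "\<phi> \<in> phase_class \<psi> \<longleftrightarrow> (\<exists>c. cmod c = 1 \<and> \<phi> = (\<lambda>x. c * \<psi> x))"
  unfolding phase_class_def by auto

lemma phase_class_self: "\<psi> \<in> phase_class \<psi>"
  unfolding phase_class_iff by (auto intro!: exI[of _ 1])

lemma phase_class_scale: "cmod c = 1 \<Longrightarrow> phase_class (\<lambda>x. c * \<psi> x) = phase_class \<psi>"
proof (rule equalityI; rule subsetI)
  fix \<phi> assume c: "cmod c = 1" and "\<phi> \<in> phase_class (\<lambda>x. c * \<psi> x)"
  then obtain d where "cmod d = 1" "\<phi> = (\<lambda>x. d * (c * \<psi> x))" by (auto simp: phase_class_iff)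
  with c show "\<phi> \<in> phase_class \<psi>"
    by (auto simp: phase_class_iff norm_mult intro!: exI[of _ "d * c"])
next
  fix \<phi> assume c: "cmod c = 1" and "\<phi> \<in> phase_class \<psi>"
  then obtain d where d: "cmod d = 1" "\<phi> = (\<lambda>x. d * \<psi> x)" by (auto simp: phase_class_iff)
  moreover from c have "c \<noteq> 0" by auto
  ultimately have "\<phi> = (\<lambda>x. (d / c) * (c * \<psi> x))" "cmod (d / c) = 1"
    using c by (auto simp: norm_divide)
  then show "\<phi> \<in> phase_class (\<lambda>x. c * \<psi> x)" unfolding phase_class_iff by blast
qed

lemma some_in_phase_class: "\<exists>c. cmod c = 1 \<and> (SOME \<phi>. \<phi> \<in> phase_class \<psi>) = (\<lambda>x. c * \<psi> x)"
  using someI[of "\<lambda>\<phi>. \<phi> \<in> phase_class \<psi>", OF phase_class_self] by (simp add: phase_class_iff)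

lemma phase_class_ket_inj: "phase_class (ket a) = phase_class (ket b) \<Longrightarrow> a = b"
proof -
  assume "phase_class (ket a) = phase_class (ket b)"
  then obtain c where "ket a = (\<lambda>x. c * ket b x)"
    using phase_class_self[of "ket a"] by (auto simp: phase_class_iff)
  then have "ket a a = c * ket b a" by metis
  then show "a = b" by (auto simp: ket_def split: if_splits)
qed

context univ_comm_group
begin

definition convolution :: "('x \<Rightarrow> complex) \<Rightarrow> ('x \<Rightarrow> complex) \<Rightarrow> 'x \<Rightarrow> complex" where
  "convolution \<psi> \<phi> = mu group_algebra (tensor \<psi> \<phi>)"

definition involution :: "('x \<Rightarrow> complex) \<Rightarrow> 'x \<Rightarrow> complex" where
  "involution \<psi> a = cnj (\<psi> (inv a))"

lemma convolution_apply: "convolution \<psi> \<phi> c = (\<Sum>a\<in>UNIV. \<psi> a * \<phi> (inv a \<otimes> c))"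
  by (simp add: convolution_def mu_group_algebra tensor_def)

lemma convolution_commute: "convolution \<psi> \<phi> = convolution \<phi> \<psi>"
proof -
  have "swap2 (tensor \<psi> \<phi>) = tensor \<phi> \<psi>" by (simp add: fun_eq_iff swap2_def tensor_def)
  then show ?thesis unfolding convolution_def by (metis mu_group_algebra_swap)
qed

lemma convolution_assoc: "convolution (convolution \<psi> \<phi>) \<chi> = convolution \<psi> (convolution \<phi> \<chi>)"
proof -
  define w where "w = (\<lambda>(a::'x, b::'x, c::'x). \<psi> a * \<phi> b * \<chi> c)"
  have "mu_left group_algebra w = tensor (convolution \<psi> \<phi>) \<chi>"
    by (simp add: fun_eq_iff mu_left_def w_def tensor_def convolution_def mu_def
        sum_distrib_left sum_distrib_right mult_ac)
  moreover have "mu_right group_algebra w = tensor \<psi> (convolution \<phi> \<chi>)"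
    by (simp add: fun_eq_iff mu_right_def w_def tensor_def convolution_def mu_def
        sum_distrib_left mult_ac)
  ultimately show ?thesis using mu_group_algebra_assoc[of w] by (simp add: convolution_def)
qed

lemma convolution_left_commute:
  "convolution \<psi> (convolution \<phi> \<chi>) = convolution \<phi> (convolution \<psi> \<chi>)"
  by (simp only: convolution_assoc[symmetric] convolution_commute[of \<psi> \<phi>])

lemma convolution_unit_left [simp]: "convolution group_unit \<psi> = \<psi>"
  by (simp add: convolution_def mu_group_unit_left)

lemma convolution_unit_right [simp]: "convolution \<psi> group_unit = \<psi>"
  by (simp add: convolution_def mu_group_unit_right)

lemma convolution_scale:
  "convolution (\<lambda>x. c * \<psi> x) (\<lambda>x. d * \<phi> x) = (\<lambda>x. (c * d) * convolution \<psi> \<phi> x)"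
  by (simp add: fun_eq_iff convolution_apply sum_distrib_left mult_ac)

lemma convolution_ket: "convolution (ket a) (ket b) = ket (a \<otimes> b)"
  by (simp add: fun_eq_iff convolution_apply ket_mult_left) (simp add: ket_def mult_eq_iff_inv_mult)

lemma involution_convolution:
  "involution (convolution \<psi> \<phi>) = convolution (involution \<psi>) (involution \<phi>)"
proof
  fix a
  have "convolution (involution \<psi>) (involution \<phi>) a
      = (\<Sum>y\<in>UNIV. (\<lambda>y. cnj (\<psi> (inv y)) * cnj (\<phi> (inv (inv y \<otimes> a)))) y)"
    by (simp add: convolution_apply involution_def)
  also have "\<dots> = (\<Sum>x\<in>UNIV. (\<lambda>y. cnj (\<psi> (inv y)) * cnj (\<phi> (inv (inv y \<otimes> a)))) (inv x))"
    by (rule sum_inv_reindex[symmetric])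
  also have "\<dots> = involution (convolution \<psi> \<phi>) a"
    by (simp add: convolution_apply involution_def inv_mult)
  finally show "involution (convolution \<psi> \<phi>) a = convolution (involution \<psi>) (involution \<phi>) a" ..
qed

lemma involution_involution [simp]: "involution (involution \<psi>) = \<psi>"
  by (simp add: fun_eq_iff involution_def)

lemma involution_ket: "involution (ket g) = ket (inv g)"
  by (auto simp: fun_eq_iff involution_def ket_def)

lemma is_phase_iff: "is_phase group_algebra group_unit \<psi> \<longleftrightarrow>
    convolution (involution \<psi>) \<psi> = group_unit"
proof -
  have "convolution (involution \<psi>) \<psi> b = (\<Sum>a\<in>UNIV. cnj (\<psi> a) * comu group_algebra \<psi> (a, b))" for b
  proof -
    have "convolution (involution \<psi>) \<psi> b = (\<Sum>a\<in>UNIV. (\<lambda>a. cnj (\<psi> a) * \<psi> (a \<otimes> b)) (inv a))"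
      by (simp add: convolution_apply involution_def)
    also have "\<dots> = (\<Sum>a\<in>UNIV. cnj (\<psi> a) * comu group_algebra \<psi> (a, b))"
      by (subst sum_inv_reindex) (simp add: comu_group_algebra)
    finally show ?thesis .
  qed
  then show ?thesis unfolding is_phase_def by (simp add: fun_eq_iff)
qed

lemma is_phase_convolution:
  assumes "is_phase group_algebra group_unit \<psi>" "is_phase group_algebra group_unit \<phi>"
  shows "is_phase group_algebra group_unit (convolution \<psi> \<phi>)"
proof -
  have "convolution (involution (convolution \<psi> \<phi>)) (convolution \<psi> \<phi>)
      = convolution (convolution (involution \<psi>) \<psi>) (convolution (involution \<phi>) \<phi>)"
    unfolding involution_convolution
    by (simp only: convolution_assoc convolution_commute convolution_left_commute)
  with assms show ?thesis unfolding is_phase_iff by simp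
qed

lemma is_phase_involution:
  "is_phase group_algebra group_unit \<psi> \<Longrightarrow> is_phase group_algebra group_unit (involution \<psi>)"
  unfolding is_phase_iff by (simp add: convolution_commute)

lemma is_phase_ket: "is_phase group_algebra group_unit (ket g)"
  unfolding is_phase_iff by (simp add: involution_ket convolution_ket group_unit_def)

abbreviation phases :: "('x \<Rightarrow> complex) set monoid" where
  "phases \<equiv> phase_group group_algebra group_unit"

lemma phases_carrier: "carrier phases = phase_class ` {\<psi>. is_phase group_algebra group_unit \<psi>}"
  by (simp add: phase_group_def)

lemma phases_one: "\<one>\<^bsub>phases\<^esub> = phase_class group_unit"
  by (simp add: phase_group_def)

lemma phases_mult:
  "phase_class \<psi> \<otimes>\<^bsub>phases\<^esub> phase_class \<phi> = phase_class (convolution \<psi> \<phi>)"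
proof -
  obtain c where c: "cmod c = 1" "(SOME \<psi>'. \<psi>' \<in> phase_class \<psi>) = (\<lambda>x. c * \<psi> x)"
    using some_in_phase_class by blast
  obtain d where d: "cmod d = 1" "(SOME \<phi>'. \<phi>' \<in> phase_class \<phi>) = (\<lambda>x. d * \<phi> x)"
    using some_in_phase_class by blast
  have "phase_class \<psi> \<otimes>\<^bsub>phases\<^esub> phase_class \<phi>
      = phase_class (convolution (\<lambda>x. c * \<psi> x) (\<lambda>x. d * \<phi> x))"
    by (simp add: phase_group_def c d convolution_def)
  also have "\<dots> = phase_class (convolution \<psi> \<phi>)"
    using c d by (simp add: convolution_scale phase_class_scale norm_mult)
  finally show ?thesis .
qed

lemma phases_comm_group: "comm_group phases"
proof (rule comm_groupI)
  show "\<one>\<^bsub>phases\<^esub> \<in> carrier phases"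
    using is_phase_ket[of \<one>, folded group_unit_def] by (simp add: phases_one phases_carrier)
next
  fix x y z assume "x \<in> carrier phases" "y \<in> carrier phases" "z \<in> carrier phases"
  then obtain \<psi> \<phi> \<chi> where phase: "is_phase group_algebra group_unit \<psi>"
      "is_phase group_algebra group_unit \<phi>"
    and xyz: "x = phase_class \<psi>" "y = phase_class \<phi>" "z = phase_class \<chi>"
    by (auto simp: phases_carrier)
  show "x \<otimes>\<^bsub>phases\<^esub> y \<in> carrier phases"
    using phase by (simp add: xyz phases_mult phases_carrier is_phase_convolution)
  show "x \<otimes>\<^bsub>phases\<^esub> y \<otimes>\<^bsub>phases\<^esub> z = x \<otimes>\<^bsub>phases\<^esub> (y \<otimes>\<^bsub>phases\<^esub> z)"
    by (simp add: xyz phases_mult convolution_assoc)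
  show "x \<otimes>\<^bsub>phases\<^esub> y = y \<otimes>\<^bsub>phases\<^esub> x"
    by (simp add: xyz phases_mult convolution_commute)
  show "\<one>\<^bsub>phases\<^esub> \<otimes>\<^bsub>phases\<^esub> x = x"
    by (simp add: xyz phases_mult phases_one)
  show "\<exists>y\<in>carrier phases. y \<otimes>\<^bsub>phases\<^esub> x = \<one>\<^bsub>phases\<^esub>"
  proof
    show "phase_class (involution \<psi>) \<in> carrier phases"
      using is_phase_involution[OF phase(1)] by (simp add: phases_carrier)
    show "phase_class (involution \<psi>) \<otimes>\<^bsub>phases\<^esub> x = \<one>\<^bsub>phases\<^esub>"
      using phase(1) by (simp add: xyz phases_mult phases_one is_phase_iff)
  qed
qed

lemma phases_inv:
  assumes "is_phase group_algebra group_unit \<psi>"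
  shows "inv\<^bsub>phases\<^esub> (phase_class \<psi>) = phase_class (involution \<psi>)"
proof (rule group.inv_equality)
  show "group phases" using phases_comm_group by (simp add: comm_group_def)
  show "phase_class (involution \<psi>) \<otimes>\<^bsub>phases\<^esub> phase_class \<psi> = \<one>\<^bsub>phases\<^esub>"
    using assms by (simp add: phases_mult phases_one is_phase_iff)
  show "phase_class \<psi> \<in> carrier phases"
    using assms by (simp add: phases_carrier)
  show "phase_class (involution \<psi>) \<in> carrier phases"
    using is_phase_involution[OF assms] by (simp add: phases_carrier)
qed

lemma kets_subgroup: "subgroup (phase_class ` range ket) phases"
proof (rule group.subgroupI)
  show "group phases" using phases_comm_group by (simp add: comm_group_def)
  show "phase_class ` range ket \<subseteq> carrier phases"
    using is_phase_ket by (auto simp: phases_carrier)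
  show "phase_class ` range ket \<noteq> {}" by simp
  show "inv\<^bsub>phases\<^esub> a \<in> phase_class ` range ket" if "a \<in> phase_class ` range ket" for a
    using that by (auto simp: phases_inv is_phase_ket involution_ket)
  show "a \<otimes>\<^bsub>phases\<^esub> b \<in> phase_class ` range ket"
    if "a \<in> phase_class ` range ket" "b \<in> phase_class ` range ket" for a b
    using that by (auto simp: phases_mult convolution_ket)
qed

lemma kets_iso: "(\<lambda>g. phase_class (ket g)) \<in> iso G (phases\<lparr>carrier := phase_class ` range ket\<rparr>)"
  unfolding iso_def hom_def
proof (intro CollectI conjI)
  show "(\<lambda>g. phase_class (ket g)) \<in> carrier G \<rightarrow> carrier (phases\<lparr>carrier := phase_class ` range ket\<rparr>)"
    by auto
  show "\<forall>x\<in>carrier G. \<forall>y\<in>carrier G. phase_class (ket (x \<otimes> y)) =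
      phase_class (ket x) \<otimes>\<^bsub>phases\<lparr>carrier := phase_class ` range ket\<rparr>\<^esub> phase_class (ket y)"
    by (simp add: phases_mult convolution_ket)
  show "bij_betw (\<lambda>g. phase_class (ket g)) (carrier G)
      (carrier (phases\<lparr>carrier := phase_class ` range ket\<rparr>))"
    by (auto simp: bij_betw_def inj_on_def intro: phase_class_ket_inj)
qed

section \<open>Characters\<close>

definition characters :: "('x \<Rightarrow> complex) set" where
  "characters = {\<chi>. (\<forall>x y. \<chi> (x \<otimes> y) = \<chi> x * \<chi> y) \<and> (\<forall>x. cmod (\<chi> x) = 1)}"

lemma character_mult: "\<chi> \<in> characters \<Longrightarrow> \<chi> (x \<otimes> y) = \<chi> x * \<chi> y"
  and character_unimodular: "\<chi> \<in> characters \<Longrightarrow> cmod (\<chi> x) = 1"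
  by (auto simp: characters_def)

lemma character_nonzero: "\<chi> \<in> characters \<Longrightarrow> \<chi> x \<noteq> 0"
  by (metis character_unimodular norm_zero zero_neq_one)

lemma character_one: "\<chi> \<in> characters \<Longrightarrow> \<chi> \<one> = 1"
  using character_mult[of \<chi> \<one> \<one>] character_nonzero[of \<chi> \<one>] by simp

lemma character_inv: "\<chi> \<in> characters \<Longrightarrow> \<chi> (inv x) = cnj (\<chi> x)"
  using character_mult[of \<chi> x "inv x"] character_one[of \<chi>]
    unimodular_cnj_eq_inverse[OF character_unimodular, of \<chi> x]
  by (simp add: inverse_unique)

lemma character_nat_pow: "\<chi> \<in> characters \<Longrightarrow> \<chi> (x [^] (k::nat)) = \<chi> x ^ k"
  by (induction k) (simp_all add: character_one character_mult)

lemma character_int_pow: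
  assumes \<chi>: "\<chi> \<in> characters"
  shows "\<chi> (x [^] (k::int)) = \<chi> x powi k"
proof (cases "k < 0")
  case True
  then have "\<chi> (x [^] k) = cnj (\<chi> (x [^] nat (- k)))"
    by (simp del: pow_nat add: int_pow_def2 character_inv[OF \<chi>])
  also have "\<dots> = inverse (\<chi> x ^ nat (- k))"
    by (simp add: unimodular_cnj_eq_inverse character_unimodular[OF \<chi>] character_nat_pow[OF \<chi>]
        power_inverse)
  also have "\<dots> = \<chi> x powi k" using True by (simp add: power_int_def power_inverse)
  finally show ?thesis .
next
  case False
  then show ?thesis
    by (simp del: pow_nat add: int_pow_def2 character_nat_pow[OF \<chi>] power_int_def)
qed

lemma character_finprod:
  assumes "\<chi> \<in> characters" and "finite A"
  shows "\<chi> (finprod G f A) = (\<Prod>a\<in>A. \<chi> (f a))"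
  using assms(2)
  by (induction A rule: finite_induct)
    (simp_all add: character_one[OF assms(1)] character_mult[OF assms(1)] Pi_def)

lemma characters_mult_closed:
  "\<chi> \<in> characters \<Longrightarrow> \<chi>' \<in> characters \<Longrightarrow> (\<lambda>x. \<chi> x * \<chi>' x) \<in> characters"
  by (auto simp: characters_def norm_mult)

lemma characters_cnj_closed: "\<chi> \<in> characters \<Longrightarrow> (\<lambda>x. cnj (\<chi> x)) \<in> characters"
  by (auto simp: characters_def)

lemma trivial_character: "(\<lambda>x. 1) \<in> characters"
  by (simp add: characters_def)

text \<open>Every character takes values in the \<open>|G|\<close>-th roots of unity.\<close>

lemma finite_characters: "finite characters"
proof -
  define N where "N = order G"
  have "N > 0" by (simp add: N_def order_def carrier_UNIV card_gt_0_iff)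
  then have "finite (PiE UNIV (\<lambda>_::'x. {z::complex. z ^ N = 1}))"
    by (intro finite_PiE) auto
  moreover have "characters \<subseteq> PiE UNIV (\<lambda>_::'x. {z::complex. z ^ N = 1})"
  proof
    fix \<chi> assume \<chi>: "\<chi> \<in> characters"
    have "\<chi> x ^ N = 1" for x
      using pow_order_eq_1[of x] character_nat_pow[OF \<chi>, of x N] character_one[OF \<chi>]
      by (simp add: N_def)
    then show "\<chi> \<in> PiE UNIV (\<lambda>_. {z. z ^ N = 1})" by (simp add: PiE_def extensional_def)
  qed
  ultimately show ?thesis by (rule finite_subset[rotated])
qed

lemma sum_nontrivial_character:
  assumes \<chi>: "\<chi> \<in> characters" and "\<chi> x0 \<noteq> 1"
  shows "(\<Sum>x\<in>UNIV. \<chi> x) = 0"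
proof -
  have "(\<Sum>x\<in>UNIV. \<chi> x) = (\<Sum>x\<in>UNIV. \<chi> (x0 \<otimes> x))" by (rule sum_mult_reindex[symmetric])
  also have "\<dots> = \<chi> x0 * (\<Sum>x\<in>UNIV. \<chi> x)" by (simp add: character_mult[OF \<chi>] sum_distrib_left)
  finally have "(1 - \<chi> x0) * (\<Sum>x\<in>UNIV. \<chi> x) = 0" by (simp add: algebra_simps)
  with assms(2) show ?thesis by simp
qed

lemma characters_orthogonal:
  assumes \<chi>: "\<chi> \<in> characters" and \<chi>': "\<chi>' \<in> characters"
  shows "(\<Sum>a\<in>UNIV. \<chi> a * cnj (\<chi>' a)) = (if \<chi> = \<chi>' then of_nat (card (UNIV :: 'x set)) else 0)"
proof (cases "\<chi> = \<chi>'")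
  case True
  then show ?thesis
    using unimodular_cnj_mult_self[OF character_unimodular[OF \<chi>']] by (simp add: mult.commute)
next
  case False
  then obtain a where a: "\<chi> a \<noteq> \<chi>' a" by auto
  have "\<chi> a * cnj (\<chi>' a) \<noteq> 1"
  proof
    assume "\<chi> a * cnj (\<chi>' a) = 1"
    then have "\<chi> a * (cnj (\<chi>' a) * \<chi>' a) = \<chi>' a" by (simp add: mult.assoc[symmetric])
    then show False
      using a unimodular_cnj_mult_self[OF character_unimodular[OF \<chi>']] by simp
  qed
  then have "(\<Sum>a\<in>UNIV. \<chi> a * cnj (\<chi>' a)) = 0"
    by (rule sum_nontrivial_character[OF characters_mult_closed[OF \<chi> characters_cnj_closed[OF \<chi>']]])
  with False show ?thesis by simp
qed

text \<open>Characters separate points: the unknowns are \<open>y\<^sub>v\<close> (\<open>v \<in> G\<close>), the equation \<open>None\<close> is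
  \<open>y\<^sub>b = \<omega>\<close>, the equation \<open>Some (x, z)\<close> is \<open>y\<^sub>x y\<^sub>z / y\<^bsub>x \<otimes> z\<^esub> = 1\<close>, so a unimodular
  solution is a character with value \<open>\<omega>\<close> at \<open>b\<close>.  The system is consistent because
  substituting \<open>y\<^sub>v := v\<close> turns a relation \<open>c\<close> into \<open>b [^] c None = \<one>\<close>, so \<open>\<omega> powi c None = 1\<close>.\<close>

definition character_equations :: "'x \<Rightarrow> ('x \<times> 'x) option \<Rightarrow> 'x \<Rightarrow> int" where
  "character_equations b s v = (case s of
      None \<Rightarrow> (if v = b then 1 else 0)
    | Some (x, z) \<Rightarrow> (if v = x then 1 else 0) + (if v = z then 1 else 0) + (if v = x \<otimes> z then -1 else 0))"

lemma finprod_indicator_UNIV: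
  fixes x :: "'c::finite"
  shows "finprod G (\<lambda>v. if v = x then h else \<one>) UNIV = h"
  using finprod_singleton_swap[of x UNIV "\<lambda>_. h"] by (simp add: Pi_def)

lemma finprod_character_equations:
  "finprod G (\<lambda>v. v [^] character_equations b s v) UNIV = (if s = None then b else \<one>)"
proof (cases s)
  case None
  have "v [^] (if v = b then 1 else 0 :: int) = (if v = b then b else \<one>)" for v
    by simp
  with None show ?thesis by (simp add: character_equations_def finprod_indicator_UNIV del: pow_nat)
next
  case (Some p)
  obtain x z where p: "p = (x, z)" by (cases p)
  have "v [^] character_equations b s v
      = (if v = x then x else \<one>) \<otimes> (if v = z then z else \<one>) \<otimes> (if v = x \<otimes> z then inv (x \<otimes> z) else \<one>)"
    for v
    by (simp add: character_equations_def Some p int_pow_mult int_pow_neg del: pow_nat)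
  then have "finprod G (\<lambda>v. v [^] character_equations b s v) UNIV = x \<otimes> z \<otimes> inv (x \<otimes> z)"
    by (simp add: Pi_def finprod_indicator_UNIV finprod_multf)
  then show ?thesis using Some by simp
qed

lemma character_equations_solution:
  assumes unit: "\<forall>r. cmod (y r) = 1"
    and sol: "\<forall>s. (\<Prod>r\<in>UNIV. y r powi character_equations b s r) = (case s of None \<Rightarrow> \<omega> | Some _ \<Rightarrow> 1)"
  shows "y \<in> characters" and "y b = \<omega>"
proof -
  have y0: "y r \<noteq> 0" for r using unit by (metis norm_zero zero_neq_one)
  have "y (x \<otimes> z) = y x * y z" for x z
  proof -
    have "y r powi character_equations b (Some (x, z)) r
        = (if r = x then y r else 1) * (if r = z then y r else 1) * (if r = x \<otimes> z then inverse (y r) else 1)"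
      for r using y0 by (simp add: character_equations_def power_int_add)
    then have "y x * y z * inverse (y (x \<otimes> z)) = 1"
      using sol[rule_format, of "Some (x, z)"] by (simp add: prod.distrib)
    then show ?thesis using y0 by (simp add: field_simps)
  qed
  with unit show "y \<in> characters" by (simp add: characters_def)
  show "y b = \<omega>"
    using sol[rule_format, of None]
    by (simp add: character_equations_def if_distrib[of "\<lambda>k. _ powi k"] cong: if_cong)
qed

lemma characters_separate:
  assumes b: "b \<noteq> \<one>"
  shows "\<exists>\<chi>\<in>characters. \<chi> b \<noteq> 1"
proof -
  have "ord b \<noteq> 1" using b pow_ord_eq_1[of b] by (metis in_carrier nat_pow_eone)
  moreover have "ord b \<ge> 1" by (rule ord_ge_1) simp_all
  ultimately obtain \<omega> where \<omega>: "cmod \<omega> = 1" "\<omega> ^ ord b = 1" "\<omega> \<noteq> 1"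
    using exists_nontrivial_root_of_unity[of "ord b"] by auto
  define rhs :: "('x \<times> 'x) option \<Rightarrow> complex" where "rhs s = (case s of None \<Rightarrow> \<omega> | Some _ \<Rightarrow> 1)" for s
  have "(\<Prod>s\<in>UNIV. rhs s powi c s) = 1"
    if c: "row_relation (character_equations b) UNIV UNIV c" for c
  proof -
    have "finprod G (\<lambda>s. finprod G (\<lambda>v. v [^] character_equations b s v) UNIV [^] c s) UNIV = \<one>"
      using c by (intro finprod_row_relation) auto
    then have "finprod G (\<lambda>s::('x \<times> 'x) option. if s = None then b [^] c None else \<one>) UNIV = \<one>"
      by (simp add: finprod_character_equations if_distrib[of "\<lambda>x. x [^] _"] cong: if_cong)
    then have "b [^] c None = \<one>" by (simp add: finprod_indicator_UNIV)
    then obtain t where "c None = int (ord b) * t" by (auto simp: int_pow_eq_id)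
    then have "\<omega> powi c None = 1" by (simp add: power_int_mult \<omega>(2))
    moreover have "rhs s powi c s = (if s = None then \<omega> powi c None else 1)" for s
      by (simp add: rhs_def split: option.split)
    ultimately show ?thesis by simp
  qed
  moreover have "\<forall>s\<in>UNIV. cmod (rhs s) = 1" by (simp add: rhs_def \<omega>(1) split: option.splits)
  ultimately obtain y where "\<forall>r. cmod (y r) = 1"
    and "\<forall>s\<in>UNIV. (\<Prod>r\<in>UNIV. y r powi character_equations b s r) = rhs s"
    using unit_circle_solution[of UNIV UNIV rhs "character_equations b"] by auto
  then have "y \<in> characters" "y b = \<omega>"
    using character_equations_solution[of y b \<omega>] by (auto simp: rhs_def)
  with \<omega>(3) show ?thesis by blast
qed

lemma sum_characters_nontrivial:
  assumes "b \<noteq> \<one>"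
  shows "(\<Sum>\<chi>\<in>characters. \<chi> b) = 0"
proof -
  obtain \<chi>0 where \<chi>0: "\<chi>0 \<in> characters" "\<chi>0 b \<noteq> 1" using characters_separate[OF assms] by blast
  have unit: "cnj (\<chi>0 x) * \<chi>0 x = 1" for x
    using unimodular_cnj_mult_self[OF character_unimodular[OF \<chi>0(1)]] .
  have "(\<Sum>\<chi>\<in>characters. \<chi>0 b * \<chi> b) = (\<Sum>\<chi>\<in>characters. \<chi> b)"
  proof (rule sum.reindex_bij_witness[where j="\<lambda>\<chi> x. \<chi>0 x * \<chi> x" and i="\<lambda>\<chi> x. cnj (\<chi>0 x) * \<chi> x"])
    fix \<chi> assume \<chi>: "\<chi> \<in> characters"
    show "(\<lambda>x. cnj (\<chi>0 x) * (\<chi>0 x * \<chi> x)) = \<chi>" using unit by (simp add: mult.assoc[symmetric])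
    show "(\<lambda>x. \<chi>0 x * (cnj (\<chi>0 x) * \<chi> x)) = \<chi>"
      using unit by (simp add: mult.assoc[symmetric] mult.commute[of "\<chi>0 _"])
    show "(\<lambda>x. \<chi>0 x * \<chi> x) \<in> characters" by (rule characters_mult_closed[OF \<chi>0(1) \<chi>])
    show "(\<lambda>x. cnj (\<chi>0 x) * \<chi> x) \<in> characters"
      by (rule characters_mult_closed[OF characters_cnj_closed[OF \<chi>0(1)] \<chi>])
  qed simp
  then have "\<chi>0 b * (\<Sum>\<chi>\<in>characters. \<chi> b) = 1 * (\<Sum>\<chi>\<in>characters. \<chi> b)"
    by (simp add: sum_distrib_left)
  then have "(\<chi>0 b - 1) * (\<Sum>\<chi>\<in>characters. \<chi> b) = 0" by (simp add: left_diff_distrib)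
  with \<chi>0(2) show ?thesis by simp
qed

text \<open>Double counting \<open>\<Sum>\<^sub>\<chi> \<Sum>\<^sub>x \<chi> x\<close>: only the trivial character contributes to the rows,
  only the neutral element to the columns.\<close>

lemma card_characters: "card characters = card (UNIV :: 'x set)"
proof -
  have "(\<Sum>\<chi>\<in>characters. \<Sum>x\<in>UNIV. \<chi> x)
      = (\<Sum>\<chi>\<in>characters. if \<chi> = (\<lambda>_. 1) then of_nat (card (UNIV :: 'x set)) else 0)"
  proof (rule sum.cong[OF refl])
    fix \<chi> assume \<chi>: "\<chi> \<in> characters"
    show "(\<Sum>x\<in>UNIV. \<chi> x) = (if \<chi> = (\<lambda>_. 1) then of_nat (card (UNIV :: 'x set)) else 0)"
    proof (cases "\<chi> = (\<lambda>_. 1)")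
      case False
      then obtain x0 where "\<chi> x0 \<noteq> 1" by auto
      with False show ?thesis using sum_nontrivial_character[OF \<chi>] by simp
    qed simp
  qed
  also have "\<dots> = of_nat (card (UNIV :: 'x set))"
    using trivial_character finite_characters by simp
  finally have rows: "(\<Sum>\<chi>\<in>characters. \<Sum>x\<in>UNIV. \<chi> x) = of_nat (card (UNIV :: 'x set))" .
  have "(\<Sum>\<chi>\<in>characters. \<Sum>x\<in>UNIV. \<chi> x) = (\<Sum>x\<in>UNIV. \<Sum>\<chi>\<in>characters. \<chi> x)"
    by (rule sum.swap)
  also have "\<dots> = (\<Sum>x\<in>UNIV. if x = \<one> then of_nat (card characters) else 0)"
    by (intro sum.cong refl) (simp add: sum_characters_nontrivial character_one)
  also have "\<dots> = of_nat (card characters)" by simp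
  finally have "(of_nat (card characters) :: complex) = of_nat (card (UNIV :: 'x set))"
    using rows by simp
  then show ?thesis using of_nat_eq_iff by blast
qed

section \<open>Fourier inversion and the solution in the phase group\<close>

definition fourier_inverse :: "(('x \<Rightarrow> complex) \<Rightarrow> complex) \<Rightarrow> 'x \<Rightarrow> complex" where
  "fourier_inverse l x = (\<Sum>\<chi>\<in>characters. l \<chi> * cnj (\<chi> x)) / of_nat (card (UNIV :: 'x set))"

lemma fourier_inverse_cong:
  "(\<And>\<chi>. \<chi> \<in> characters \<Longrightarrow> l \<chi> = l' \<chi>) \<Longrightarrow> fourier_inverse l = fourier_inverse l'"
  unfolding fourier_inverse_def by (intro ext arg_cong[where f="\<lambda>z. z / _"] sum.cong) auto

lemma fourier_inverse_evaluation: "fourier_inverse (\<lambda>\<chi>. \<chi> g) = ket g"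
proof
  fix x
  have "(\<Sum>\<chi>\<in>characters. \<chi> g * cnj (\<chi> x)) = (\<Sum>\<chi>\<in>characters. \<chi> (g \<otimes> inv x))"
    by (intro sum.cong refl) (simp add: character_mult character_inv)
  also have "\<dots> = (if x = g then of_nat (card (UNIV :: 'x set)) else 0)"
  proof (cases "x = g")
    case True
    then show ?thesis using card_characters by (simp add: character_one)
  next
    case False
    then have "g \<otimes> inv x \<noteq> \<one>" by (metis in_carrier inv_equality inv_inv)
    with False show ?thesis by (simp add: sum_characters_nontrivial)
  qed
  finally show "fourier_inverse (\<lambda>\<chi>. \<chi> g) x = ket g x"
    by (simp add: fourier_inverse_def ket_def)
qed

lemma fourier_inverse_one: "fourier_inverse (\<lambda>\<chi>. 1) = group_unit"
proof -
  have "fourier_inverse (\<lambda>\<chi>. 1) = fourier_inverse (\<lambda>\<chi>. \<chi> \<one>)"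
    by (rule fourier_inverse_cong) (simp add: character_one)
  then show ?thesis by (simp add: fourier_inverse_evaluation group_unit_def)
qed

lemma convolution_sum_sum:
  "convolution (\<lambda>x. \<Sum>i\<in>A. f i x) (\<lambda>x. \<Sum>j\<in>B. g j x) c
    = (\<Sum>i\<in>A. \<Sum>j\<in>B. convolution (f i) (g j) c)"
proof -
  have "convolution (\<lambda>x. \<Sum>i\<in>A. f i x) (\<lambda>x. \<Sum>j\<in>B. g j x) c
      = (\<Sum>a\<in>UNIV. \<Sum>i\<in>A. \<Sum>j\<in>B. f i a * g j (inv a \<otimes> c))"
    by (simp add: convolution_apply sum_product)
  also have "\<dots> = (\<Sum>i\<in>A. \<Sum>a\<in>UNIV. \<Sum>j\<in>B. f i a * g j (inv a \<otimes> c))"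
    by (rule sum.swap)
  also have "\<dots> = (\<Sum>i\<in>A. \<Sum>j\<in>B. \<Sum>a\<in>UNIV. f i a * g j (inv a \<otimes> c))"
    by (intro sum.cong refl sum.swap)
  finally show ?thesis by (simp add: convolution_apply)
qed

lemma convolution_cnj_characters:
  assumes \<chi>: "\<chi> \<in> characters" and \<chi>': "\<chi>' \<in> characters"
  shows "convolution (\<lambda>x. cnj (\<chi> x)) (\<lambda>x. cnj (\<chi>' x)) c
    = (if \<chi> = \<chi>' then of_nat (card (UNIV :: 'x set)) * cnj (\<chi> c) else 0)"
proof -
  have "convolution (\<lambda>x. cnj (\<chi> x)) (\<lambda>x. cnj (\<chi>' x)) c
      = cnj (\<chi>' c) * (\<Sum>a\<in>UNIV. \<chi>' a * cnj (\<chi> a))"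
    by (simp add: convolution_apply sum_distrib_left character_mult[OF \<chi>'] character_inv[OF \<chi>']
        mult_ac)
  then show ?thesis by (simp add: characters_orthogonal[OF \<chi>' \<chi>] eq_commute[of \<chi>'])
qed

lemma fourier_inverse_sum:
  "fourier_inverse l = (\<lambda>x. \<Sum>\<chi>\<in>characters. (l \<chi> / of_nat (card (UNIV :: 'x set))) * cnj (\<chi> x))"
  by (simp add: fun_eq_iff fourier_inverse_def sum_divide_distrib)

lemma convolution_fourier_inverse:
  "convolution (fourier_inverse l) (fourier_inverse m) = fourier_inverse (\<lambda>\<chi>. l \<chi> * m \<chi>)"
proof
  fix c
  define N :: complex where "N = of_nat (card (UNIV :: 'x set))"
  have N: "N \<noteq> 0" by (simp add: N_def)
  have scale: "convolution (\<lambda>x. a * \<psi> x) (\<lambda>x. b * \<phi> x) c = a * b * convolution \<psi> \<phi> c"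
    for a b \<psi> \<phi> by (simp add: convolution_scale)
  have "convolution (fourier_inverse l) (fourier_inverse m) c
      = (\<Sum>\<chi>\<in>characters. \<Sum>\<chi>'\<in>characters.
          (l \<chi> / N) * (m \<chi>' / N) * convolution (\<lambda>x. cnj (\<chi> x)) (\<lambda>x. cnj (\<chi>' x)) c)"
    unfolding fourier_inverse_sum convolution_sum_sum N_def by (intro sum.cong refl scale)
  also have "\<dots> = (\<Sum>\<chi>\<in>characters. (l \<chi> / N) * (m \<chi> / N) * (N * cnj (\<chi> c)))"
    by (intro sum.cong refl)
      (simp add: convolution_cnj_characters N_def if_distrib finite_characters cong: if_cong)
  also have "\<dots> = fourier_inverse (\<lambda>\<chi>. l \<chi> * m \<chi>) c"
    using N by (simp add: fourier_inverse_def N_def sum_divide_distrib mult.assoc)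
  finally show "convolution (fourier_inverse l) (fourier_inverse m) c
      = fourier_inverse (\<lambda>\<chi>. l \<chi> * m \<chi>) c" .
qed

lemma involution_fourier_inverse:
  "involution (fourier_inverse l) = fourier_inverse (\<lambda>\<chi>. cnj (l \<chi>))"
  by (simp add: fun_eq_iff involution_def fourier_inverse_def character_inv)

definition unimodular_on_characters :: "(('x \<Rightarrow> complex) \<Rightarrow> complex) \<Rightarrow> bool" where
  "unimodular_on_characters l \<longleftrightarrow> (\<forall>\<chi>\<in>characters. cmod (l \<chi>) = 1)"

lemma is_phase_fourier_inverse:
  assumes "unimodular_on_characters l"
  shows "is_phase group_algebra group_unit (fourier_inverse l)"
proof -
  have "fourier_inverse (\<lambda>\<chi>. cnj (l \<chi>) * l \<chi>) = fourier_inverse (\<lambda>\<chi>. 1)"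
    using assms by (intro fourier_inverse_cong) (simp add: unimodular_on_characters_def unimodular_cnj_mult_self)
  then show ?thesis
    by (simp add: is_phase_iff involution_fourier_inverse convolution_fourier_inverse fourier_inverse_one)
qed

lemma fourier_inverse_in_phases:
  "unimodular_on_characters l \<Longrightarrow> phase_class (fourier_inverse l) \<in> carrier phases"
  by (simp add: phases_carrier is_phase_fourier_inverse)

lemma phases_nat_pow_fourier_inverse:
  "phase_class (fourier_inverse l) [^]\<^bsub>phases\<^esub> (k::nat) = phase_class (fourier_inverse (\<lambda>\<chi>. l \<chi> ^ k))"
  by (induction k) (simp_all add: phases_one fourier_inverse_one phases_mult
      convolution_fourier_inverse mult.commute)

lemma phases_int_pow_fourier_inverse:
  assumes l: "unimodular_on_characters l"
  shows "phase_class (fourier_inverse l) [^]\<^bsub>phases\<^esub> (k::int)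
    = phase_class (fourier_inverse (\<lambda>\<chi>. l \<chi> powi k))"
proof (cases "k < 0")
  case True
  have "unimodular_on_characters (\<lambda>\<chi>. l \<chi> ^ nat (- k))"
    using l by (simp add: unimodular_on_characters_def norm_power)
  then have "phase_class (fourier_inverse l) [^]\<^bsub>phases\<^esub> k
      = phase_class (fourier_inverse (\<lambda>\<chi>. cnj (l \<chi> ^ nat (- k))))"
    using True by (simp del: pow_nat add: int_pow_def2 phases_nat_pow_fourier_inverse phases_inv
        is_phase_fourier_inverse involution_fourier_inverse)
  also have "fourier_inverse (\<lambda>\<chi>. cnj (l \<chi> ^ nat (- k))) = fourier_inverse (\<lambda>\<chi>. l \<chi> powi k)"
    using l True by (intro fourier_inverse_cong)
      (simp add: unimodular_on_characters_def unimodular_cnj_eq_inverse power_int_def power_inverse)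
  finally show ?thesis .
next
  case False
  then show ?thesis
    by (simp del: pow_nat add: int_pow_def2 phases_nat_pow_fourier_inverse power_int_def)
qed

lemma phases_finprod_fourier_inverse:
  assumes "finite A" and "\<forall>r\<in>A. unimodular_on_characters (L r)"
  shows "finprod phases (\<lambda>r. phase_class (fourier_inverse (L r))) A
    = phase_class (fourier_inverse (\<lambda>\<chi>. \<Prod>r\<in>A. L r \<chi>))"
  using assms
proof (induction A rule: finite_induct)
  case empty
  have "comm_monoid phases" using phases_comm_group by (simp add: comm_group_def)
  then show ?case by (simp add: comm_monoid.finprod_empty phases_one fourier_inverse_one)
next
  case (insert e A)
  have "comm_monoid phases" using phases_comm_group by (simp add: comm_group_def)
  then have "finprod phases (\<lambda>r. phase_class (fourier_inverse (L r))) (insert e A)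
      = phase_class (fourier_inverse (L e)) \<otimes>\<^bsub>phases\<^esub>
        finprod phases (\<lambda>r. phase_class (fourier_inverse (L r))) A"
    using insert by (intro comm_monoid.finprod_insert) (auto simp: fourier_inverse_in_phases)
  with insert show ?case by (simp add: phases_mult convolution_fourier_inverse)
qed

lemma consistent_system_solvable_at_character:
  assumes "consistent_system G M S n a" and \<chi>: "\<chi> \<in> characters"
  shows "\<exists>y. (\<forall>r. cmod (y r) = 1) \<and> (\<forall>s\<in>{..<S}. (\<Prod>r\<in>{..<M}. y r powi n s r) = \<chi> (a s))"
proof (rule unit_circle_solution)
  show "\<forall>s\<in>{..<S}. cmod (\<chi> (a s)) = 1" using character_unimodular[OF \<chi>] by simp
  show "\<forall>c. row_relation n {..<S} {..<M} c \<longrightarrow> (\<Prod>s\<in>{..<S}. \<chi> (a s) powi c s) = 1"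
  proof (intro allI impI)
    fix c assume "row_relation n {..<S} {..<M} c"
    then have "\<chi> (finprod G (\<lambda>s. a s [^] c s) {..<S}) = 1"
      using consistent_system_row_relation[OF assms(1)] character_one[OF \<chi>] by simp
    then show "(\<Prod>s\<in>{..<S}. \<chi> (a s) powi c s) = 1"
      by (simp add: character_finprod[OF \<chi>] character_int_pow[OF \<chi>])
  qed
qed simp_all

lemma consistent_system_solvable_in_phases:
  assumes "consistent_system G M S n a"
  shows "has_solution phases M S n (\<lambda>s. phase_class (ket (a s)))"
proof -
  obtain Y where Y: "\<And>\<chi>. \<chi> \<in> characters \<Longrightarrow> (\<forall>r. cmod (Y \<chi> r) = 1) \<and>
      (\<forall>s\<in>{..<S}. (\<Prod>r\<in>{..<M}. Y \<chi> r powi n s r) = \<chi> (a s))"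
    using consistent_system_solvable_at_character[OF assms] by metis
  define \<beta> where "\<beta> r = fourier_inverse (\<lambda>\<chi>. Y \<chi> r)" for r
  have unimodular: "unimodular_on_characters (\<lambda>\<chi>. Y \<chi> r powi k)" for r k
    using Y by (simp add: unimodular_on_characters_def norm_power_int)
  show ?thesis
    unfolding has_solution_def
  proof (intro exI[of _ "\<lambda>r. phase_class (\<beta> r)"] conjI allI impI)
    show "phase_class (\<beta> r) \<in> carrier phases" for r
      using fourier_inverse_in_phases unimodular[of r 1] by (simp add: \<beta>_def)
    fix s assume s: "s < S"
    have "finprod phases (\<lambda>r. phase_class (\<beta> r) [^]\<^bsub>phases\<^esub> n s r) {..<M}
        = finprod phases (\<lambda>r. phase_class (fourier_inverse (\<lambda>\<chi>. Y \<chi> r powi n s r))) {..<M}"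
      using unimodular[of _ 1] by (simp add: \<beta>_def phases_int_pow_fourier_inverse)
    also have "\<dots> = phase_class (fourier_inverse (\<lambda>\<chi>. \<Prod>r\<in>{..<M}. Y \<chi> r powi n s r))"
      by (rule phases_finprod_fourier_inverse) (simp_all add: unimodular)
    also have "fourier_inverse (\<lambda>\<chi>. \<Prod>r\<in>{..<M}. Y \<chi> r powi n s r) = fourier_inverse (\<lambda>\<chi>. \<chi> (a s))"
      using Y s by (intro fourier_inverse_cong) simp
    finally show "finprod phases (\<lambda>r. phase_class (\<beta> r) [^]\<^bsub>phases\<^esub> n s r) {..<M}
        = phase_class (ket (a s))"
      by (simp add: fourier_inverse_evaluation)
  qed
qed

end

theorem mainTheorem1:
  fixes G :: "('x::finite, 'b) monoid_scheme"
    and M S :: nat and n :: "nat \<Rightarrow> nat \<Rightarrow> int" and a :: "nat \<Rightarrow> 'x"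
  assumes "comm_group G" and "carrier G = UNIV"
    and "\<forall>s<S. a s \<in> carrier G"
    and "consistent_system G M S n a"
    and "\<not> has_solution G M S n a"
  shows "\<exists>(m :: 'x \<Rightarrow> 'x \<Rightarrow> 'x \<Rightarrow> complex) (\<eta> :: 'x \<Rightarrow> complex) f.
           qs_comm_dagger_frobenius m \<eta> \<and>
           comm_group (phase_group m \<eta>) \<and>
           strongly_complementary m \<eta> \<and>
           subgroup (phase_class ` range ket) (phase_group m \<eta>) \<and>
           f \<in> iso G ((phase_group m \<eta>)\<lparr>carrier := phase_class ` range ket\<rparr>) \<and>
           has_solution (phase_group m \<eta>) M S n (\<lambda>s. f (a s))"
proof -
  interpret univ_comm_group G
    using assms(1,2) by (intro univ_comm_group.intro univ_comm_group_axioms.intro)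
  show ?thesis
    using group_algebra_frobenius phases_comm_group group_algebra_strongly_complementary
      kets_subgroup kets_iso consistent_system_solvable_in_phases[OF assms(4)]
    by blast
qed

end
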